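(* Let $N=(S,T,F,M_0,\ell)$ be a Petri net and $N'=(S',T',F',M'_0,\ell')$ be a plain net with $S'\subseteq S$ and $M'_0=M_0\upharpoonright S'$. Suppose there exist sets $T_+ \subseteq T$ and $T_-\subseteq T$ and a class $\mathcal{NF}\subseteq \mathbb{Z}^T$ (of finite signed multisets of transitions), such that (1) $F\upharpoonright(S\cup T_+)$ is acyclic; (2) $F\upharpoonright(S\cup T_-)$ is acyclic; (3) for every $t\in T$ with $\ell(t)\neq\tau$ there is a $t'\in T'$ with $\ell'(t')=\ell(t)$ such that ${}^\bullet t' \leq {}^*t$ and there is a finite multiset $G\in\mathbb{N}^T$ with $\ell(G)\equiv\emptyset$ and $[\![t']\!]=[\![t+G]\!]$; here ${}^*t$ is the multiset of faithful origins of $t$ w.r.t. $T_+$ and $S'\cup\{s\in S \mid M_0(s)>0\}$; (4) there exists a function $f:T\rightarrow\mathbb{N}$ with $f(t)>0$ for all $t\in T$, extended linearly to finite signed multisets ($f(G)=\sum_t G(t)\cdot f(t)$), such that for each finite $G\in \mathbb{Z}^T$ with $\ell(G)\equiv\emptyset$ there is a finite $H\in \mathcal{NF}$ with $\ell(H)\equiv\emptyset$, $[\![H]\!]=[\![G]\!]$ and $f(H)=f(G)$; and (5) for every reachable marking $M'$ of $N'$ there is a finite multiset $H_{M'}\in\mathbb{N}^{T_+}$ with $\ell(H_{M'})\equiv\emptyset$, such that for each finite $H\in \mathcal{NF}$ for which $M:=M'+(M_0-M'_0)+[\![H]\!]$ is a reachable marking of $N$ one has: (a) $M_{M'}:=M'+(M_0-M'_0)+[\![H_{M'}]\!]\in\mathbb{N}^S$;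 (b) if $M'$ enables a transition labelled $a\in\mathrm{Act}$ then $M_{M'}$ enables a transition labelled $a$; (c) $H\leq H_{M'}$; (d) if $H(u)<0$ then $u\in T_-$; (e) if $H(u)<0$ and $H(t)>0$ then ${}^\bullet u \cap {}^\bullet t = \emptyset$; (f) if $H(u)<0$ and $M$ enables $t$ with $\ell(t)\neq\tau$ then ${}^\bullet u \cap {}^\bullet t = \emptyset$. Then $N$ and $N'$ are interleaving branching bisimilar with explicit divergence.
   Context: Petri nets are labelled over $\mathrm{Act}\cup\{\tau\}$ with $\tau$ the invisible action; a net is plain if its labelling is injective and no transition is labelled $\tau$. For a transition $t$, ${}^\bullet t$ and $t^\bullet$ are the multisets of pre- and postplaces (given by arc weights), and the token replacement is $[\![t]\!]=t^\bullet-{}^\bullet t$, extended linearly to finite signed multisets of transitions. For a signed multiset $G$ of transitions, $\ell(G)\equiv\emptyset$ means every transition $t$ with $G(t)\neq 0$ has $\ell(t)=\tau$. Faithful origins: a path is an alternating sequence $x_0x_1\cdots x_n$ of places and transitions with $F(x_i,x_{i+1})>0$, its arc weight being $\prod_i F(x_i,x_{i+1})$; a place $s$ is faithful w.r.t. $T_+$ and $S_+$ iff $|\{s\}\cap S_+|+\sum_{t\in T_+}F(t,s)=1$; a path is faithful iff all nodes $x_i$ with $0\le i<n$ are transitions in $T_+$ or faithful places; and ${}^*x(s)$ is the supremum of the arc weights of faithful paths from $s\in S_+$ to $x$ (0 if none). Interleaving branching bisimilarity with explicit divergence is branching bisimilarity with explicit divergence of the labelled transition systems whose states are markings and whose transitions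 are single firings $M[t\rangle M'$ labelled $\ell(t)$. *)

theory Defs
  imports Main "HOL-Library.Extended_Nat"
begin

text \<open>Places have type 's, transitions type 't (so S and T are disjoint),
  visible actions type 'a; the label None is the invisible action tau.
  pre t s = F(s,t), post t s = F(t,s).\<close>

record ('s, 't, 'a) pnet =
  places :: "'s set"
  trans  :: "'t set"
  pre    :: "'t \<Rightarrow> 's \<Rightarrow> nat"
  post   :: "'t \<Rightarrow> 's \<Rightarrow> nat"
  init   :: "'s \<Rightarrow> nat"
  lab    :: "'t \<Rightarrow> 'a option"

definition wf_net :: "('s, 't, 'a) pnet \<Rightarrow> bool" where
  "wf_net N \<longleftrightarrow>
     (\<forall>t s. pre N t s \<noteq> 0 \<longrightarrow> t \<in> trans N \<and> s \<in> places N) \<and>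
     (\<forall>t s. post N t s \<noteq> 0 \<longrightarrow> t \<in> trans N \<and> s \<in> places N) \<and>
     (\<forall>s. init N s \<noteq> 0 \<longrightarrow> s \<in> places N)"

definition plain :: "('s, 't, 'a) pnet \<Rightarrow> bool" where
  "plain N \<longleftrightarrow> inj_on (lab N) (trans N) \<and> (\<forall>t \<in> trans N. lab N t \<noteq> None)"

definition enabled :: "('s, 't, 'a) pnet \<Rightarrow> ('s \<Rightarrow> nat) \<Rightarrow> 't \<Rightarrow> bool" where
  "enabled N M t \<longleftrightarrow> t \<in> trans N \<and> (\<forall>s. pre N t s \<le> M s)"

definition fire :: "('s, 't, 'a) pnet \<Rightarrow> ('s \<Rightarrow> nat) \<Rightarrow> 't \<Rightarrow> ('s \<Rightarrow> nat)" where
  "fire N M t = (\<lambda>s. M s - pre N t s + post N t s)"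

definition net_step :: "('s, 't, 'a) pnet \<Rightarrow> ('s \<Rightarrow> nat) \<Rightarrow> 'a option \<Rightarrow> ('s \<Rightarrow> nat) \<Rightarrow> bool" where
  "net_step N M \<alpha> M' \<longleftrightarrow> (\<exists>t. enabled N M t \<and> lab N t = \<alpha> \<and> M' = fire N M t)"

definition reachable :: "('s, 't, 'a) pnet \<Rightarrow> ('s \<Rightarrow> nat) \<Rightarrow> bool" where
  "reachable N M \<longleftrightarrow> (\<lambda>M1 M2. \<exists>\<alpha>. net_step N M1 \<alpha> M2)\<^sup>*\<^sup>* (init N) M"

definition fin_sms :: "'t set \<Rightarrow> ('t \<Rightarrow> int) \<Rightarrow> bool" where
  "fin_sms X G \<longleftrightarrow> finite {t. G t \<noteq> 0} \<and> {t. G t \<noteq> 0} \<subseteq> X"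

definition tokrep :: "('s, 't, 'a) pnet \<Rightarrow> 't \<Rightarrow> 's \<Rightarrow> int" where
  "tokrep N t = (\<lambda>s. int (post N t s) - int (pre N t s))"

definition tokrep_ms :: "('s, 't, 'a) pnet \<Rightarrow> ('t \<Rightarrow> int) \<Rightarrow> 's \<Rightarrow> int" where
  "tokrep_ms N G = (\<lambda>s. \<Sum>t \<in> {t. G t \<noteq> 0}. G t * tokrep N t s)"

definition invisible :: "('s, 't, 'a) pnet \<Rightarrow> ('t \<Rightarrow> int) \<Rightarrow> bool" where
  "invisible N G \<longleftrightarrow> (\<forall>t. G t \<noteq> 0 \<longrightarrow> lab N t = None)"

definition fval :: "('t \<Rightarrow> nat) \<Rightarrow> ('t \<Rightarrow> int) \<Rightarrow> int" where
  "fval f G = (\<Sum>t \<in> {t. G t \<noteq> 0}. G t * int (f t))"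

definition flow :: "('s, 't, 'a) pnet \<Rightarrow> ('s + 't) \<Rightarrow> ('s + 't) \<Rightarrow> nat" where
  "flow N x y = (case (x, y) of
      (Inl s, Inr t) \<Rightarrow> pre N t s
    | (Inr t, Inl s) \<Rightarrow> post N t s
    | _ \<Rightarrow> 0)"

definition flow_rel :: "('s, 't, 'a) pnet \<Rightarrow> (('s + 't) \<times> ('s + 't)) set" where
  "flow_rel N = {(x, y). flow N x y > 0}"

definition flow_restr :: "('s, 't, 'a) pnet \<Rightarrow> 't set \<Rightarrow> (('s + 't) \<times> ('s + 't)) set" where
  "flow_restr N X = Restr (flow_rel N) (Inl ` places N \<union> Inr ` X)"

definition is_path :: "('s, 't, 'a) pnet \<Rightarrow> ('s + 't) list \<Rightarrow> bool" where
  "is_path N xs \<longleftrightarrow> xs \<noteq> [] \<and> (\<forall>i. Suc i < length xs \<longrightarrow> flow N (xs ! i) (xs ! Suc i) > 0)"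

definition path_weight :: "('s, 't, 'a) pnet \<Rightarrow> ('s + 't) list \<Rightarrow> nat" where
  "path_weight N xs = (\<Prod>i < length xs - 1. flow N (xs ! i) (xs ! Suc i))"

text \<open>|{s} \<inter> Sp| + sum_{t in Tp} F(t,s) = 1 (the sum taken over the transitions
  with nonzero weight, which must be finitely many).\<close>
definition faithful_place :: "('s, 't, 'a) pnet \<Rightarrow> 't set \<Rightarrow> 's set \<Rightarrow> 's \<Rightarrow> bool" where
  "faithful_place N Tp Sp s \<longleftrightarrow>
     finite {t \<in> Tp. post N t s > 0} \<and>
     (if s \<in> Sp then 1 else 0) + (\<Sum>t \<in> {t \<in> Tp. post N t s > 0}. post N t s) = (1::nat)"

definition faithful_path :: "('s, 't, 'a) pnet \<Rightarrow> 't set \<Rightarrow> 's set \<Rightarrow> ('s + 't) list \<Rightarrow> bool" where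
  "faithful_path N Tp Sp xs \<longleftrightarrow> is_path N xs \<and>
     (\<forall>i. Suc i < length xs \<longrightarrow>
        (case xs ! i of Inr t \<Rightarrow> t \<in> Tp | Inl s \<Rightarrow> faithful_place N Tp Sp s))"

definition origins :: "('s, 't, 'a) pnet \<Rightarrow> 't set \<Rightarrow> 's set \<Rightarrow> ('s + 't) \<Rightarrow> 's \<Rightarrow> enat" where
  "origins N Tp Sp x s = (if s \<in> Sp then
      Sup {enat (path_weight N xs) | xs. faithful_path N Tp Sp xs \<and> hd xs = Inl s \<and> last xs = x}
    else 0)"

definition bb_transfer :: "('p \<Rightarrow> 'b option \<Rightarrow> 'p \<Rightarrow> bool) \<Rightarrow> ('q \<Rightarrow> 'b option \<Rightarrow> 'q \<Rightarrow> bool)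
    \<Rightarrow> ('p \<Rightarrow> 'q \<Rightarrow> bool) \<Rightarrow> bool" where
  "bb_transfer A B R \<longleftrightarrow>
     (\<forall>p q \<alpha> p'. R p q \<and> A p \<alpha> p' \<longrightarrow>
        (\<alpha> = None \<and> R p' q) \<or>
        (\<exists>q1 q2. (\<lambda>x y. B x None y)\<^sup>*\<^sup>* q q1 \<and> B q1 \<alpha> q2 \<and> R p q1 \<and> R p' q2)) \<and>
     (\<forall>p q ps. R p q \<and> ps 0 = p \<and> (\<forall>k. A (ps k) None (ps (Suc k))) \<and> (\<forall>k. R (ps k) q) \<longrightarrow>
        (\<exists>qs. qs 0 = q \<and> (\<forall>l. B (qs l) None (qs (Suc l))) \<and> (\<forall>k l. R (ps k) (qs l))))"

definition bbd_bisim :: "('p \<Rightarrow> 'b option \<Rightarrow> 'p \<Rightarrow> bool) \<Rightarrow> ('q \<Rightarrow> 'b option \<Rightarrow> 'q \<Rightarrow> bool)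
    \<Rightarrow> ('p \<Rightarrow> 'q \<Rightarrow> bool) \<Rightarrow> bool" where
  "bbd_bisim A B R \<longleftrightarrow> bb_transfer A B R \<and> bb_transfer B A (conversep R)"

definition int_bbd_bisimilar :: "('s, 't, 'a) pnet \<Rightarrow> ('s, 'u, 'a) pnet \<Rightarrow> bool" where
  "int_bbd_bisimilar N N' \<longleftrightarrow>
     (\<exists>R. bbd_bisim (net_step N) (net_step N') R \<and> R (init N) (init N'))"

end

theory Submission
  imports Defs
begin

text \<open>A marking M of N is related to a reachable marking M' of N' when
  M = M' + (M0 - M0') + [[G]] for a finite invisible G, which by (4) can be taken in NF.
  A visible step of N is matched by the transition t' of (3): along a faithful path every token
  demanded at its end is present in M' or produced by the positive part of the normal form,
  which lies in T+ and by (e) and (f) does not compete with the negative part; since a faithful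
  place has a unique producer in T+, of arc weight 1, the demand of t' is met by M'.
  A visible step of N' is matched after invisible steps of N firing first the negative part of
  the normal form and then the rest of H_M' (possible by acyclicity of T- and T+), after which
  (b) applies. Divergence is excluded because each invisible step raises the f-weight of the
  normal form, which (c) bounds by the f-weight of H_M'.\<close>

lemma fin_sms_add:
  assumes "fin_sms X G1" "fin_sms X G2"
  shows "fin_sms X (\<lambda>u. G1 u + G2 u)"
proof -
  have "{u. G1 u + G2 u \<noteq> 0} \<subseteq> {u. G1 u \<noteq> 0} \<union> {u. G2 u \<noteq> 0}" by auto
  then show ?thesis using assms unfolding fin_sms_def by (meson finite_Un finite_subset le_sup_iff order_trans)
qed

lemma fin_sms_diff:
  assumes "fin_sms X G1" "fin_sms X G2"
  shows "fin_sms X (\<lambda>u. G1 u - G2 u)"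
proof -
  have "{u. G1 u - G2 u \<noteq> 0} \<subseteq> {u. G1 u \<noteq> 0} \<union> {u. G2 u \<noteq> 0}" by auto
  then show ?thesis using assms unfolding fin_sms_def by (meson finite_Un finite_subset le_sup_iff order_trans)
qed

lemma fin_sms_single: "t \<in> X \<Longrightarrow> fin_sms X (\<lambda>u. if u = t then 1 else 0)"
  unfolding fin_sms_def by simp

lemma fin_sms_mono: "fin_sms X G \<Longrightarrow> X \<subseteq> Y \<Longrightarrow> fin_sms Y G"
  unfolding fin_sms_def by blast

lemma fin_sms_finite_support: "fin_sms X G \<Longrightarrow> finite {u. G u \<noteq> 0}"
  unfolding fin_sms_def by blast

lemma invisible_add: "invisible N G1 \<Longrightarrow> invisible N G2 \<Longrightarrow> invisible N (\<lambda>u. G1 u + G2 u)"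
  unfolding invisible_def by (metis add.right_neutral)

lemma invisible_diff: "invisible N G1 \<Longrightarrow> invisible N G2 \<Longrightarrow> invisible N (\<lambda>u. G1 u - G2 u)"
  unfolding invisible_def by (metis diff_self)

lemma invisible_single: "lab N t = None \<Longrightarrow> invisible N (\<lambda>u. if u = t then 1 else 0)"
  unfolding invisible_def by simp

lemma tokrep_ms_superset:
  assumes "finite B" "{t. G t \<noteq> 0} \<subseteq> B"
  shows "tokrep_ms N G s = (\<Sum>t\<in>B. G t * tokrep N t s)"
  unfolding tokrep_ms_def by (rule sum.mono_neutral_left) (use assms in auto)

lemma fval_superset:
  assumes "finite B" "{t. G t \<noteq> 0} \<subseteq> B"
  shows "fval f G = (\<Sum>t\<in>B. G t * int (f t))"
  unfolding fval_def by (rule sum.mono_neutral_left) (use assms in auto)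

lemma tokrep_ms_zero [simp]: "tokrep_ms N (\<lambda>_. 0) s = 0"
  unfolding tokrep_ms_def by simp

lemma tokrep_ms_single [simp]: "tokrep_ms N (\<lambda>u. if u = t then 1 else 0) s = tokrep N t s"
  unfolding tokrep_ms_def by simp

lemma fval_single [simp]: "fval f (\<lambda>u. if u = t then 1 else 0) = int (f t)"
  unfolding fval_def by simp

lemma tokrep_ms_add:
  assumes "finite {u. G1 u \<noteq> 0}" "finite {u. G2 u \<noteq> 0}"
  shows "tokrep_ms N (\<lambda>u. G1 u + G2 u) s = tokrep_ms N G1 s + tokrep_ms N G2 s"
proof -
  let ?B = "{u. G1 u \<noteq> 0} \<union> {u. G2 u \<noteq> 0}"
  have B: "finite ?B" using assms by simp
  have "tokrep_ms N (\<lambda>u. G1 u + G2 u) s = (\<Sum>t\<in>?B. (G1 t + G2 t) * tokrep N t s)"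
    by (rule tokrep_ms_superset[OF B]) auto
  also have "\<dots> = (\<Sum>t\<in>?B. G1 t * tokrep N t s) + (\<Sum>t\<in>?B. G2 t * tokrep N t s)"
    by (simp add: distrib_right sum.distrib)
  also have "\<dots> = tokrep_ms N G1 s + tokrep_ms N G2 s"
    by (simp add: tokrep_ms_superset[OF B])
  finally show ?thesis .
qed

lemma tokrep_ms_diff:
  assumes "finite {u. G1 u \<noteq> 0}" "finite {u. G2 u \<noteq> 0}"
  shows "tokrep_ms N (\<lambda>u. G1 u - G2 u) s = tokrep_ms N G1 s - tokrep_ms N G2 s"
proof -
  let ?B = "{u. G1 u \<noteq> 0} \<union> {u. G2 u \<noteq> 0}"
  have B: "finite ?B" using assms by simp
  have "tokrep_ms N (\<lambda>u. G1 u - G2 u) s = (\<Sum>t\<in>?B. (G1 t - G2 t) * tokrep N t s)"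
    by (rule tokrep_ms_superset[OF B]) auto
  also have "\<dots> = (\<Sum>t\<in>?B. G1 t * tokrep N t s) - (\<Sum>t\<in>?B. G2 t * tokrep N t s)"
    by (simp add: left_diff_distrib sum_subtractf)
  also have "\<dots> = tokrep_ms N G1 s - tokrep_ms N G2 s"
    by (simp add: tokrep_ms_superset[OF B])
  finally show ?thesis .
qed

lemma fval_add:
  assumes "finite {u. G1 u \<noteq> 0}" "finite {u. G2 u \<noteq> 0}"
  shows "fval f (\<lambda>u. G1 u + G2 u) = fval f G1 + fval f G2"
proof -
  let ?B = "{u. G1 u \<noteq> 0} \<union> {u. G2 u \<noteq> 0}"
  have B: "finite ?B" using assms by simp
  have "fval f (\<lambda>u. G1 u + G2 u) = (\<Sum>t\<in>?B. (G1 t + G2 t) * int (f t))"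
    by (rule fval_superset[OF B]) auto
  also have "\<dots> = fval f G1 + fval f G2"
    by (simp add: fval_superset[OF B] distrib_right sum.distrib)
  finally show ?thesis .
qed

lemma fval_mono:
  assumes "finite {u. G1 u \<noteq> 0}" "finite {u. G2 u \<noteq> 0}" "\<And>u. G1 u \<le> G2 u"
  shows "fval f G1 \<le> fval f G2"
proof -
  let ?B = "{u. G1 u \<noteq> 0} \<union> {u. G2 u \<noteq> 0}"
  have "finite ?B" using assms by simp
  then have "(\<Sum>t\<in>?B. G1 t * int (f t)) \<le> (\<Sum>t\<in>?B. G2 t * int (f t))"
    by (intro sum_mono mult_right_mono assms(3)) simp
  with \<open>finite ?B\<close> show ?thesis
    using fval_superset[of ?B G1] fval_superset[of ?B G2] by simp
qed

lemma
  fixes K :: "'t \<Rightarrow> int"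
  assumes "finite {u. K u \<noteq> 0}"
  shows tokrep_ms_remove_one: "tokrep_ms N K p = tokrep_ms N (K(t := K t - 1)) p + tokrep N t p"
    and fval_remove_one: "fval f K = fval f (K(t := K t - 1)) + int (f t)"
proof -
  define K1 where "K1 = K(t := K t - 1)"
  define \<delta> where "\<delta> u = (if u = t then 1 else 0::int)" for u
  have split: "K = (\<lambda>u. K1 u + \<delta> u)" unfolding K1_def \<delta>_def by auto
  have "{u. K1 u \<noteq> 0} \<subseteq> insert t {u. K u \<noteq> 0}" unfolding K1_def by auto
  then have fin: "finite {u. K1 u \<noteq> 0}" "finite {u. \<delta> u \<noteq> 0}"
    using assms unfolding \<delta>_def by (simp_all add: finite_subset)
  show "tokrep_ms N K p = tokrep_ms N (K(t := K t - 1)) p + tokrep N t p"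
    unfolding K1_def[symmetric] by (subst split, simp only: tokrep_ms_add[OF fin]) (simp add: \<delta>_def)
  show "fval f K = fval f (K(t := K t - 1)) + int (f t)"
    unfolding K1_def[symmetric] by (subst split, simp only: fval_add[OF fin]) (simp add: \<delta>_def)
qed

abbreviation tau_steps :: "('s, 't, 'a) pnet \<Rightarrow> ('s \<Rightarrow> nat) \<Rightarrow> ('s \<Rightarrow> nat) \<Rightarrow> bool" where
  "tau_steps N \<equiv> (\<lambda>M1 M2. net_step N M1 None M2)\<^sup>*\<^sup>*"

lemma int_fire:
  assumes "enabled N M t"
  shows "int (fire N M t s) = int (M s) + tokrep N t s"
proof -
  have "pre N t s \<le> M s" using assms unfolding enabled_def by blast
  then show ?thesis unfolding fire_def tokrep_def by simp
qed

lemma reachable_init: "reachable N (init N)"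
  unfolding reachable_def by simp

lemma reachable_step: "reachable N M \<Longrightarrow> net_step N M \<alpha> M2 \<Longrightarrow> reachable N M2"
  unfolding reachable_def by (metis (mono_tags, lifting) rtranclp.rtrancl_into_rtrancl)

lemma reachable_fire: "reachable N M \<Longrightarrow> enabled N M t \<Longrightarrow> reachable N (fire N M t)"
  using reachable_step[of N M "lab N t"] unfolding net_step_def by blast

lemma reachable_tau_steps: "tau_steps N M M2 \<Longrightarrow> reachable N M \<Longrightarrow> reachable N M2"
  by (induction rule: rtranclp_induct) (auto intro: reachable_step)

lemma reachable_outside_places:
  assumes "wf_net N" "reachable N M" "s \<notin> places N"
  shows "M s = 0"
proof -
  have "(\<lambda>M1 M2. \<exists>\<alpha>. net_step N M1 \<alpha> M2)\<^sup>*\<^sup>* (init N) M"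
    using assms(2) unfolding reachable_def .
  then show ?thesis
  proof (induction rule: rtranclp_induct)
    case base then show ?case using assms(1,3) unfolding wf_net_def by auto
  next
    case (step M1 M2)
    then obtain t where "M2 = fire N M1 t" unfolding net_step_def by auto
    moreover have "post N t s = 0" using assms(1,3) unfolding wf_net_def by auto
    ultimately show ?case using step by (simp add: fire_def)
  qed
qed

lemma plain_no_tau_step: "plain N \<Longrightarrow> \<not> net_step N M None M2"
  unfolding net_step_def plain_def enabled_def by blast

section \<open>Firing an invisible multiset along an acyclic flow\<close>

lemma acyclic_flow_restr_source:
  assumes wf: "wf_net N" and acyc: "acyclic (flow_restr N T0)"
    and A: "finite A" "A \<subseteq> T0" "A \<noteq> {}"
  shows "\<exists>t\<in>A. \<forall>w\<in>A. \<forall>p. post N w p = 0 \<or> pre N t p = 0"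
proof -
  define r where "r = {(w, t). w \<in> A \<and> t \<in> A \<and> (\<exists>p. post N w p > 0 \<and> pre N t p > 0)}"
  have "r \<subseteq> inv_image ((flow_restr N T0)\<^sup>+) Inr"
  proof
    fix wt assume "wt \<in> r"
    then obtain w t p where wt: "wt = (w, t)" "w \<in> A" "t \<in> A" "post N w p > 0" "pre N t p > 0"
      unfolding r_def by blast
    then have "p \<in> places N" using wf unfolding wf_net_def by (metis not_gr0)
    then have "(Inr w, Inl p) \<in> flow_restr N T0" "(Inl p, Inr t) \<in> flow_restr N T0"
      using wt A(2) unfolding flow_restr_def flow_rel_def flow_def by auto
    then have "(Inr w, Inr t) \<in> (flow_restr N T0)\<^sup>+"
      by (rule trancl_into_trancl[OF r_into_trancl])
    then show "wt \<in> inv_image ((flow_restr N T0)\<^sup>+) Inr" using wt(1) by simp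
  qed
  then have "r\<^sup>+ \<subseteq> (inv_image ((flow_restr N T0)\<^sup>+) Inr)\<^sup>+"
    by (rule trancl_mono_subset)
  also have "\<dots> = inv_image ((flow_restr N T0)\<^sup>+) Inr"
    by (simp add: trans_inv_image)
  finally have "acyclic r"
    using acyc unfolding acyclic_def by (metis in_inv_image subsetD)
  moreover have "r \<subseteq> A \<times> A" unfolding r_def by blast
  then have "finite r" using A(1) by (simp add: finite_subset)
  ultimately have "wf r" by (simp add: finite_acyclic_wf)
  obtain a where "a \<in> A" using A(3) by blast
  then obtain t where t: "t \<in> A" and min: "\<And>w. (w, t) \<in> r \<Longrightarrow> w \<notin> A"
    using wfE_min[OF \<open>wf r\<close>] by blast
  have "post N w p = 0 \<or> pre N t p = 0" if "w \<in> A" for w p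
    using min[of w] that t unfolding r_def by (metis (mono_tags, lifting) case_prodI mem_Collect_eq neq0_conv)
  with t show ?thesis by (intro bexI[of _ t] ballI allI)
qed

lemma acyclic_multiset_enabled:
  assumes wf: "wf_net N" and acyc: "acyclic (flow_restr N T0)" and T0: "T0 \<subseteq> trans N"
    and K: "fin_sms T0 K" "\<And>t. K t \<ge> 0" "K \<noteq> (\<lambda>_. 0)"
    and pre_ok: "\<And>p. \<exists>t. K t \<noteq> 0 \<and> pre N t p > 0 \<Longrightarrow> int (M p) + tokrep_ms N K p \<ge> 0"
  shows "\<exists>t. K t > 0 \<and> enabled N M t"
proof -
  let ?A = "{t. K t \<noteq> 0}"
  have A: "finite ?A" "?A \<subseteq> T0" "?A \<noteq> {}" using K unfolding fin_sms_def by auto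
  from acyclic_flow_restr_source[OF wf acyc A] obtain t
    where "t \<in> ?A" and src: "\<forall>w\<in>?A. \<forall>p. post N w p = 0 \<or> pre N t p = 0"
    by (rule bexE)
  then have t: "K t \<noteq> 0" by simp
  have source: "post N w p = 0 \<or> pre N t p = 0" if "K w \<noteq> 0" for w p
    using bspec[OF src, of w] that by simp
  have "pre N t p \<le> M p" for p
  proof (cases "pre N t p = 0")
    case False
    \<comment> \<open>no transition of K feeds p, so under K the place p only loses tokens\<close>
    have "tokrep_ms N K p = (\<Sum>w\<in>?A. - (K w * int (pre N w p)))"
      unfolding tokrep_ms_def
    proof (rule sum.cong)
      fix w assume "w \<in> ?A"
      then have "post N w p = 0" using source[of w p] False by simp
      then show "K w * tokrep N w p = - (K w * int (pre N w p))" by (simp add: tokrep_def)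
    qed simp
    also have "\<dots> = - (\<Sum>w\<in>?A. K w * int (pre N w p))"
      by (simp add: sum_negf)
    finally have tok: "tokrep_ms N K p = - (\<Sum>w\<in>?A. K w * int (pre N w p))" .
    have "K t * int (pre N t p) \<le> (\<Sum>w\<in>?A. K w * int (pre N w p))"
    proof (rule member_le_sum)
      show "\<And>w. w \<in> ?A - {t} \<Longrightarrow> 0 \<le> K w * int (pre N w p)"
        using K(2) by simp
    qed (use t A(1) in simp_all)
    moreover have "int (pre N t p) \<le> K t * int (pre N t p)"
      using t K(2)[of t] by (simp add: mult_le_cancel_right1)
    moreover have "int (M p) + tokrep_ms N K p \<ge> 0"
      using pre_ok[of p] t False by auto
    ultimately show ?thesis using tok by linarith
  qed simp
  moreover have "t \<in> trans N" using t K(1) T0 unfolding fin_sms_def by blast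
  moreover have "K t > 0" using t K(2)[of t] by simp
  ultimately show ?thesis unfolding enabled_def by blast
qed

lemma tau_steps_fire_acyclic:
  assumes wf: "wf_net N" and acyc: "acyclic (flow_restr N T0)" and T0: "T0 \<subseteq> trans N"
    and K: "fin_sms T0 K" "\<And>t. K t \<ge> 0" "invisible N K"
    and pre_ok: "\<And>p. \<exists>t. K t \<noteq> 0 \<and> pre N t p > 0 \<Longrightarrow> int (M p) + tokrep_ms N K p \<ge> 0"
  shows "\<exists>M2. tau_steps N M M2 \<and> (\<forall>p. int (M2 p) = int (M p) + tokrep_ms N K p)"
  using K pre_ok
proof (induction "nat (fval (\<lambda>_. 1) K)" arbitrary: K M rule: less_induct)
  case less
  show ?case
  proof (cases "K = (\<lambda>_. 0)")
    case True
    then show ?thesis by (intro exI[of _ M]) simp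
  next
    case False
    then obtain t where t: "K t > 0" "enabled N M t"
      using acyclic_multiset_enabled[OF wf acyc T0 less.prems(1,2) False less.prems(4)] by blast
    define K1 where "K1 = K(t := K t - 1)"
    have supp: "K u \<noteq> 0" if "K1 u \<noteq> 0" for u
      using that t(1) unfolding K1_def by (cases "u = t") auto
    have "{u. K1 u \<noteq> 0} \<subseteq> {u. K u \<noteq> 0}" using supp by blast
    then have "fin_sms T0 K1"
      using less.prems(1) unfolding fin_sms_def by (meson finite_subset order_trans)
    moreover have "K1 u \<ge> 0" for u
      using less.prems(2) t(1) by (simp add: K1_def)
    moreover have "invisible N K1"
      using less.prems(3) supp unfolding invisible_def by blast
    ultimately have K1: "fin_sms T0 K1" "\<And>u. K1 u \<ge> 0" "invisible N K1" by blast+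
    have finK: "finite {u. K u \<noteq> 0}" using less.prems(1) by (rule fin_sms_finite_support)
    have tok: "tokrep_ms N K p = tokrep_ms N K1 p + tokrep N t p" for p
      unfolding K1_def by (rule tokrep_ms_remove_one[OF finK])
    have "fval (\<lambda>_. 1) K1 \<ge> 0"
      unfolding fval_def using K1(2) by (simp add: sum_nonneg)
    then have smaller: "nat (fval (\<lambda>_. 1) K1) < nat (fval (\<lambda>_. 1) K)"
      using fval_remove_one[OF finK, of "\<lambda>_. 1" t] unfolding K1_def by linarith
    have shift: "int (fire N M t p) + tokrep_ms N K1 p = int (M p) + tokrep_ms N K p" for p
      using int_fire[OF t(2)] tok by simp
    have "\<exists>M2. tau_steps N (fire N M t) M2 \<and>
        (\<forall>p. int (M2 p) = int (fire N M t p) + tokrep_ms N K1 p)"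
    proof (rule less.hyps[OF smaller K1])
      fix p assume "\<exists>u. K1 u \<noteq> 0 \<and> pre N u p > 0"
      then obtain u where u: "K1 u \<noteq> 0" "pre N u p > 0" by blast
      then have "int (M p) + tokrep_ms N K p \<ge> 0" using less.prems(4)[of p] supp[OF u(1)] by auto
      then show "int (fire N M t p) + tokrep_ms N K1 p \<ge> 0" using shift by simp
    qed
    then obtain M2 where steps: "tau_steps N (fire N M t) M2"
        and M2: "\<forall>p. int (M2 p) = int (fire N M t p) + tokrep_ms N K1 p"
      by blast
    have "net_step N M None (fire N M t)"
      using t less.prems(3) unfolding net_step_def invisible_def by auto
    then have "tau_steps N M M2" using steps by (rule converse_rtranclp_into_rtranclp)
    moreover have "int (M2 p) = int (M p) + tokrep_ms N K p" for p
      using M2 int_fire[OF t(2)] tok by simp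
    ultimately show ?thesis by blast
  qed
qed

section \<open>Faithful paths\<close>

lemma flow_place_trans [simp]: "flow N (Inl q) (Inr t) = pre N t q"
  unfolding flow_def by simp

lemma flow_trans_place [simp]: "flow N (Inr t) (Inl q) = post N t q"
  unfolding flow_def by simp

lemma flow_into_trans: "flow N x (Inr t) > 0 \<Longrightarrow> \<exists>q. x = Inl q \<and> pre N t q > 0"
  unfolding flow_def by (cases x) auto

lemma flow_into_place: "flow N x (Inl q) > 0 \<Longrightarrow> \<exists>v. x = Inr v \<and> post N v q > 0"
  unfolding flow_def by (cases x) auto

lemma path_weight_snoc:
  assumes "zs \<noteq> []"
  shows "path_weight N (zs @ [y]) = path_weight N zs * flow N (last zs) y"
proof -
  obtain k where k: "length zs = Suc k" using assms by (cases zs) auto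
  have "path_weight N (zs @ [y]) =
      (\<Prod>i<k. flow N ((zs @ [y]) ! i) ((zs @ [y]) ! Suc i)) * flow N ((zs @ [y]) ! k) ((zs @ [y]) ! Suc k)"
    unfolding path_weight_def using k by simp
  also have "(\<Prod>i<k. flow N ((zs @ [y]) ! i) ((zs @ [y]) ! Suc i)) = path_weight N zs"
    unfolding path_weight_def using k by (intro prod.cong) (auto simp: nth_append)
  also have "(zs @ [y]) ! k = last zs" using k assms by (simp add: nth_append last_conv_nth)
  also have "(zs @ [y]) ! Suc k = y" using k by (simp add: nth_append)
  finally show ?thesis .
qed

lemma faithful_path_snocD:
  assumes "faithful_path N Tp Sp (zs @ [y])" "zs \<noteq> []"
  shows "faithful_path N Tp Sp zs" "flow N (last zs) y > 0"
    "case last zs of Inr t \<Rightarrow> t \<in> Tp | Inl s \<Rightarrow> faithful_place N Tp Sp s"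
proof -
  obtain k where k: "length zs = Suc k" using assms(2) by (cases zs) auto
  have last: "last zs = (zs @ [y]) ! k" using k assms(2) by (simp add: nth_append last_conv_nth)
  have flow: "flow N ((zs @ [y]) ! i) ((zs @ [y]) ! Suc i) > 0"
    and node: "case (zs @ [y]) ! i of Inr t \<Rightarrow> t \<in> Tp | Inl s \<Rightarrow> faithful_place N Tp Sp s"
    if "i \<le> k" for i
    using assms(1) that k unfolding faithful_path_def is_path_def by auto
  show "faithful_path N Tp Sp zs"
    unfolding faithful_path_def is_path_def
  proof (intro conjI allI impI)
    fix i assume "Suc i < length zs"
    then show "flow N (zs ! i) (zs ! Suc i) > 0"
      and "case zs ! i of Inr t \<Rightarrow> t \<in> Tp | Inl s \<Rightarrow> faithful_place N Tp Sp s"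
      using flow[of i] node[of i] k by (simp_all add: nth_append)
  qed (rule assms(2))
  show "flow N (last zs) y > 0" using flow[of k] k last by (simp add: nth_append)
  show "case last zs of Inr t \<Rightarrow> t \<in> Tp | Inl s \<Rightarrow> faithful_place N Tp Sp s"
    using node[of k] last by simp
qed

lemma faithful_path_to_transition_cases:
  assumes path: "faithful_path N Tp Sp xs" "hd xs = Inl s" "last xs = Inr x"
  obtains (source) "faithful_place N Tp Sp s" "pre N x s > 0" "path_weight N xs = pre N x s"
    | (step) us v q where "faithful_path N Tp Sp us" "hd us = Inl s" "last us = Inr v"
      "length us < length xs" "v \<in> Tp" "post N v q > 0" "faithful_place N Tp Sp q" "pre N x q > 0"
      "path_weight N xs = path_weight N us * post N v q * pre N x q"
proof -
  have "xs \<noteq> []" using path(1) unfolding faithful_path_def is_path_def by blast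
  define zs where "zs = butlast xs"
  have xs: "xs = zs @ [Inr x]"
    using \<open>xs \<noteq> []\<close> path(3) unfolding zs_def by (metis append_butlast_last_id)
  have "zs \<noteq> []" using xs path(2) by auto
  note zs = faithful_path_snocD[OF path(1)[unfolded xs] \<open>zs \<noteq> []\<close>]
  obtain q where last_zs: "last zs = Inl q" and "pre N x q > 0"
    using flow_into_trans[OF zs(2)] by blast
  have "faithful_place N Tp Sp q" using zs(3) last_zs by simp
  have weight_xs: "path_weight N xs = path_weight N zs * pre N x q"
    unfolding xs path_weight_snoc[OF \<open>zs \<noteq> []\<close>] last_zs by simp
  define us where "us = butlast zs"
  have zs_eq: "zs = us @ [Inl q]"
    using \<open>zs \<noteq> []\<close> last_zs unfolding us_def by (metis append_butlast_last_id)
  show ?thesis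
  proof (cases "us = []")
    case True
    then have "q = s" and "path_weight N zs = 1"
      using zs_eq xs path(2) by (simp_all add: path_weight_def)
    then show ?thesis
      using source \<open>faithful_place N Tp Sp q\<close> \<open>pre N x q > 0\<close> weight_xs by simp
  next
    case False
    note us = faithful_path_snocD[OF zs(1)[unfolded zs_eq] False]
    obtain v where last_us: "last us = Inr v" and "post N v q > 0"
      using flow_into_place[OF us(2)] by blast
    moreover have "v \<in> Tp" using us(3) last_us by simp
    moreover have "hd us = Inl s" "length us < length xs" using path(2) xs zs_eq False by simp_all
    moreover have "path_weight N xs = path_weight N us * post N v q * pre N x q"
      using weight_xs unfolding zs_eq path_weight_snoc[OF False] last_us by simp
    ultimately show ?thesis
      using step us(1) \<open>faithful_place N Tp Sp q\<close> \<open>pre N x q > 0\<close> by blast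
  qed
qed

lemma faithful_place_producer:
  assumes fp: "faithful_place N Tp Sp q" and v: "v \<in> Tp" "post N v q > 0"
  shows "q \<notin> Sp" and "post N v q = 1" and "\<And>y. y \<in> Tp \<Longrightarrow> y \<noteq> v \<Longrightarrow> post N y q = 0"
proof -
  let ?S = "{t \<in> Tp. post N t q > 0}"
  have fin: "finite ?S" and eq: "(if q \<in> Sp then 1 else 0) + (\<Sum>t\<in>?S. post N t q) = (1::nat)"
    using fp unfolding faithful_place_def by auto
  have "v \<in> ?S" using v by simp
  then have sum: "(\<Sum>t\<in>?S. post N t q) = post N v q + (\<Sum>t\<in>?S - {v}. post N t q)"
    by (rule sum.remove[OF fin])
  show "q \<notin> Sp" and "post N v q = 1" using eq sum v(2) by (auto split: if_splits)
  then have "(\<Sum>t\<in>?S - {v}. post N t q) = 0" using eq sum by simp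
  then have "\<forall>y\<in>?S - {v}. post N y q = 0" using fin by simp
  then show "post N y q = 0" if "y \<in> Tp" "y \<noteq> v" for y
    using that by auto
qed

lemma production_at_faithful_source:
  fixes H :: "'t \<Rightarrow> int"
  assumes "faithful_place N Tp Sp s" "s \<in> Sp" "\<And>y. H y > 0 \<Longrightarrow> y \<in> Tp"
  shows "(\<Sum>y | H y > 0. H y * int (post N y s)) = 0"
proof -
  have "post N y s = 0" if "H y > 0" for y
    using faithful_place_producer(1)[OF assms(1) assms(3)[OF that]] assms(2) by auto
  then show ?thesis by simp
qed

lemma production_at_faithful_place:
  fixes H :: "'t \<Rightarrow> int"
  assumes "faithful_place N Tp Sp q" "v \<in> Tp" "post N v q > 0"
    and "finite {y. H y > 0}" "\<And>y. H y > 0 \<Longrightarrow> y \<in> Tp"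
  shows "(\<Sum>y | H y > 0. H y * int (post N y q)) = max 0 (H v)"
proof -
  note producer = faithful_place_producer[OF assms(1-3)]
  have "(\<Sum>y | H y > 0. H y * int (post N y q)) = (\<Sum>y | H y > 0. if y = v then H v else 0)"
    using producer(2,3) assms(5) by (intro sum.cong) auto
  also have "\<dots> = max 0 (H v)" using assms(4) by simp
  finally show ?thesis .
qed

lemma origins_witness:
  assumes "enat n \<le> origins N Tp Sp x s" "n > 0"
  shows "\<exists>xs. faithful_path N Tp Sp xs \<and> hd xs = Inl s \<and> last xs = x \<and> n \<le> path_weight N xs"
proof -
  have s: "s \<in> Sp" using assms unfolding origins_def by (auto simp: enat_0_iff split: if_splits)
  have "enat (n - 1) < enat n" using assms(2) by simp
  also have "\<dots> \<le> origins N Tp Sp x s" by (rule assms(1))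
  also have "\<dots> = Sup {enat (path_weight N xs) | xs.
      faithful_path N Tp Sp xs \<and> hd xs = Inl s \<and> last xs = x}"
    using s unfolding origins_def by simp
  finally show ?thesis unfolding less_Sup_iff using assms(2) by auto
qed

lemma consumption_le_production:
  fixes H :: "'t \<Rightarrow> int"
  assumes fin: "finite {y. H y \<noteq> 0}" and M: "int (M q) = X q + tokrep_ms N H q"
    and no_neg_pre: "\<And>y. H y < 0 \<Longrightarrow> pre N y q = 0"
    and c: "(c = 1 \<and> pre N x q \<le> M q) \<or> (H x > 0 \<and> c = H x)"
  shows "c * int (pre N x q) \<le> X q + (\<Sum>y | H y > 0. H y * int (post N y q))"
proof -
  let ?P = "{y. H y > 0}" and ?Q = "{y. H y < 0}"
  have finP: "finite ?P" by (rule finite_subset[OF _ fin]) auto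
  have finQ: "finite ?Q" by (rule finite_subset[OF _ fin]) auto
  have "{y. H y \<noteq> 0} = ?P \<union> ?Q" by auto
  then have "tokrep_ms N H q = (\<Sum>y\<in>?P. H y * tokrep N y q) + (\<Sum>y\<in>?Q. H y * tokrep N y q)"
    unfolding tokrep_ms_def by (simp only:) (rule sum.union_disjoint[OF finP finQ], auto)
  moreover have "(\<Sum>y\<in>?Q. H y * tokrep N y q) = (\<Sum>y\<in>?Q. H y * int (post N y q))"
    using no_neg_pre by (intro sum.cong) (auto simp: tokrep_def)
  moreover have "(\<Sum>y\<in>?Q. H y * int (post N y q)) \<le> 0"
    by (intro sum_nonpos) (simp add: mult_nonpos_nonneg)
  moreover have "(\<Sum>y\<in>?P. H y * tokrep N y q)
      = (\<Sum>y\<in>?P. H y * int (post N y q)) - (\<Sum>y\<in>?P. H y * int (pre N y q))"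
    by (simp add: tokrep_def right_diff_distrib sum_subtractf)
  moreover have "(\<Sum>y\<in>?P. H y * int (pre N y q)) \<ge> 0" by (rule sum_nonneg) simp
  moreover have "H x * int (pre N x q) \<le> (\<Sum>y\<in>?P. H y * int (pre N y q))" if "H x > 0"
    by (rule member_le_sum) (use that finP in auto)
  ultimately show ?thesis using c M by auto
qed

text \<open>The coefficient of x is 1 for the enabled transition t and H x for x in the positive
  part of H. The place q before x on the path has a unique producer in Tp, of arc weight 1, so
  the demand of x at q can only be met by that producer, and induction carries the demand back
  to the source s.\<close>
lemma faithful_path_weight_bound:
  fixes H :: "'t \<Rightarrow> int" and X :: "'s \<Rightarrow> int"
  assumes fin: "finite {y. H y \<noteq> 0}"
    and M: "\<And>q. int (M q) = X q + tokrep_ms N H q"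
    and X_outside: "\<And>q. q \<notin> Sp \<Longrightarrow> X q = 0"
    and pos_Tp: "\<And>y. H y > 0 \<Longrightarrow> y \<in> Tp"
    and Ht: "H t = 0"
    and disjoint: "\<And>u y q. H u < 0 \<Longrightarrow> y = t \<or> H y > 0 \<Longrightarrow> pre N u q = 0 \<or> pre N y q = 0"
    and enabled: "\<And>q. pre N t q \<le> M q"
    and s: "s \<in> Sp"
  shows "faithful_path N Tp Sp xs \<Longrightarrow> hd xs = Inl s \<Longrightarrow> last xs = Inr x \<Longrightarrow> x = t \<or> H x > 0 \<Longrightarrow>
    int (path_weight N xs) * (if x = t then 1 else H x) \<le> X s"
proof (induction "length xs" arbitrary: xs x rule: less_induct)
  case less
  define c where "c = (if x = t then 1 else H x)"
  have finP: "finite {y. H y > 0}" by (rule finite_subset[OF _ fin]) auto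
  have bound: "c * int (pre N x q) \<le> X q + (\<Sum>y | H y > 0. H y * int (post N y q))"
    if "pre N x q > 0" for q
  proof (rule consumption_le_production[OF fin M])
    show "pre N u q = 0" if "H u < 0" for u
      using disjoint[OF that less.prems(4), of q] \<open>pre N x q > 0\<close> by simp
    show "(c = 1 \<and> pre N x q \<le> M q) \<or> (H x > 0 \<and> c = H x)"
      using less.prems(4) enabled unfolding c_def by auto
  qed
  have "c > 0" using less.prems(4) unfolding c_def by auto
  from less.prems(1-3) show ?case
  proof (cases rule: faithful_path_to_transition_cases)
    case source
    then show ?thesis
      using bound[of s] production_at_faithful_source[where H = H, OF source(1) s pos_Tp] unfolding c_def
      by (simp add: mult.commute)
  next
    case (step us v q)
    have "q \<notin> Sp" and "post N v q = 1" using faithful_place_producer[OF step(7,5,6)] by simp_all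
    then have "c * int (pre N x q) \<le> max 0 (H v)"
      using bound[OF step(8)] production_at_faithful_place[OF step(7,5,6) finP pos_Tp] X_outside
      by simp
    moreover have "0 < c * int (pre N x q)" using \<open>c > 0\<close> step(8) by simp
    ultimately have "H v > 0" and c_le: "c * int (pre N x q) \<le> H v" by auto
    then have "v \<noteq> t" using Ht by auto
    have "int (path_weight N xs) * c = int (path_weight N us) * (c * int (pre N x q))"
      using step(9) \<open>post N v q = 1\<close> by (simp add: algebra_simps)
    also have "\<dots> \<le> int (path_weight N us) * H v" using c_le by (simp add: mult_left_mono)
    also have "\<dots> \<le> X s"
      using less.hyps[OF step(4,1,2,3)] \<open>H v > 0\<close> \<open>v \<noteq> t\<close> by simp
    finally show ?thesis unfolding c_def .
  qed
qed

section \<open>The bisimulation\<close>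

definition lift_marking :: "('s, 't, 'a) pnet \<Rightarrow> ('s, 'u, 'a) pnet \<Rightarrow> ('s \<Rightarrow> nat) \<Rightarrow> 's \<Rightarrow> int" where
  "lift_marking N N' M' s = int (M' s) + (int (init N s) - int (init N' s))"

definition represents ::
    "('s, 't, 'a) pnet \<Rightarrow> ('s, 'u, 'a) pnet \<Rightarrow> ('s \<Rightarrow> nat) \<Rightarrow> ('t \<Rightarrow> int) \<Rightarrow> ('s \<Rightarrow> nat) \<Rightarrow> bool" where
  "represents N N' M' H M \<longleftrightarrow> (\<forall>s. int (M s) = lift_marking N N' M' s + tokrep_ms N H s)"

lemma represents_tokrep_cong:
  "tokrep_ms N H = tokrep_ms N G \<Longrightarrow> represents N N' M' G M \<Longrightarrow> represents N N' M' H M"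
  unfolding represents_def by simp

lemma represents_fire:
  assumes "represents N N' M' H M" "enabled N M t" "finite {u. H u \<noteq> 0}"
  shows "represents N N' M' (\<lambda>u. H u + (if u = t then 1 else 0)) (fire N M t)"
proof -
  have "finite {u. (if u = t then 1 else 0::int) \<noteq> 0}" by simp
  then show ?thesis
    using assms unfolding represents_def by (simp add: int_fire tokrep_ms_add)
qed

definition weighted_normal_forms :: "('s, 't, 'a) pnet \<Rightarrow> ('t \<Rightarrow> int) set \<Rightarrow> ('t \<Rightarrow> nat) \<Rightarrow> bool" where
  "weighted_normal_forms N NF f \<longleftrightarrow> (\<forall>t \<in> trans N. f t > 0) \<and>
       (\<forall>G. fin_sms (trans N) G \<and> invisible N G \<longrightarrow>
          (\<exists>H \<in> NF. fin_sms (trans N) H \<and> invisible N H \<and>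
             tokrep_ms N H = tokrep_ms N G \<and> fval f H = fval f G))"

definition dominating_multiset :: "('s, 't, 'a) pnet \<Rightarrow> ('s, 'u, 'a) pnet \<Rightarrow> 't set \<Rightarrow> 't set \<Rightarrow>
    ('t \<Rightarrow> int) set \<Rightarrow> ('s \<Rightarrow> nat) \<Rightarrow> ('t \<Rightarrow> int) \<Rightarrow> bool" where
  "dominating_multiset N N' Tp Tm NF M' HM \<longleftrightarrow>
     fin_sms Tp HM \<and> (\<forall>u. HM u \<ge> 0) \<and> invisible N HM \<and>
     (\<forall>H \<in> NF. \<forall>M. fin_sms (trans N) H \<and> reachable N M \<and> represents N N' M' H M \<longrightarrow>
        (\<forall>s. lift_marking N N' M' s + tokrep_ms N HM s \<ge> 0) \<and>
        (\<forall>a t'. enabled N' M' t' \<and> lab N' t' = Some a \<longrightarrow>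
           (\<exists>t \<in> trans N. (\<forall>s. int (pre N t s) \<le> lift_marking N N' M' s + tokrep_ms N HM s) \<and>
              lab N t = Some a)) \<and>
        (\<forall>u. H u \<le> HM u) \<and>
        (\<forall>u. H u < 0 \<longrightarrow> u \<in> Tm) \<and>
        (\<forall>u t. H u < 0 \<and> H t > 0 \<longrightarrow> (\<forall>s. pre N u s = 0 \<or> pre N t s = 0)) \<and>
        (\<forall>u t. H u < 0 \<and> enabled N M t \<and> lab N t \<noteq> None \<longrightarrow>
           (\<forall>s. pre N u s = 0 \<or> pre N t s = 0)))"

locale bisimulation_criterion =
  fixes N :: "('s, 't, 'a) pnet" and N' :: "('s, 'u, 'a) pnet"
    and Tp Tm :: "'t set" and NF :: "('t \<Rightarrow> int) set"
    and f :: "'t \<Rightarrow> nat" and HM :: "('s \<Rightarrow> nat) \<Rightarrow> 't \<Rightarrow> int"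
  assumes wf: "wf_net N" and wf': "wf_net N'" and plain': "plain N'"
    and init': "\<And>s. init N' s = (if s \<in> places N' then init N s else 0)"
    and Tp_sub: "Tp \<subseteq> trans N" and Tm_sub: "Tm \<subseteq> trans N"
    and acyclic_Tp: "acyclic (flow_restr N Tp)" and acyclic_Tm: "acyclic (flow_restr N Tm)"
    and visible_match: "\<And>t. t \<in> trans N \<Longrightarrow> lab N t \<noteq> None \<Longrightarrow>
      \<exists>t'\<in>trans N'. lab N' t' = lab N t \<and>
        (\<forall>s. enat (pre N' t' s) \<le> origins N Tp (places N' \<union> {s \<in> places N. init N s > 0}) (Inr t) s) \<and>
        (\<exists>G. fin_sms (trans N) G \<and> (\<forall>u. G u \<ge> 0) \<and> invisible N G \<and>
           tokrep N' t' = tokrep_ms N (\<lambda>u. (if u = t then 1 else 0) + G u))"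
    and normal_forms: "weighted_normal_forms N NF f"
    and dominating: "\<And>M'. reachable N' M' \<Longrightarrow> dominating_multiset N N' Tp Tm NF M' (HM M')"
begin

abbreviation origin_places :: "'s set" where
  "origin_places \<equiv> places N' \<union> {s \<in> places N. init N s > 0}"

lemma lift_marking_nonneg: "0 \<le> lift_marking N N' M' s"
  using init'[of s] unfolding lift_marking_def by auto

lemma lift_marking_places': "s \<in> places N' \<Longrightarrow> lift_marking N N' M' s = int (M' s)"
  using init'[of s] unfolding lift_marking_def by simp

lemma lift_marking_outside:
  assumes "reachable N' M'" "s \<notin> origin_places"
  shows "lift_marking N N' M' s = 0"
proof -
  have "M' s = 0" using reachable_outside_places[OF wf' assms(1)] assms(2) by simp
  moreover have "init N s = 0" using assms(2) wf unfolding wf_net_def by auto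
  ultimately show ?thesis using init'[of s] unfolding lift_marking_def by simp
qed

lemma f_pos: "t \<in> trans N \<Longrightarrow> f t > 0"
  using normal_forms unfolding weighted_normal_forms_def by blast

lemma normal_form:
  assumes "fin_sms (trans N) G" "invisible N G"
  obtains H where "H \<in> NF" "fin_sms (trans N) H" "invisible N H"
    "tokrep_ms N H = tokrep_ms N G" "fval f H = fval f G"
  using normal_forms assms that unfolding weighted_normal_forms_def by blast

lemma
  assumes "reachable N' M'"
  shows HM_fin: "fin_sms Tp (HM M')" and HM_nonneg: "HM M' u \<ge> 0"
    and HM_invisible: "invisible N (HM M')"
  using dominating[OF assms] unfolding dominating_multiset_def by auto

lemma
  assumes "reachable N' M'" "H \<in> NF" "fin_sms (trans N) H" "reachable N M" "represents N N' M' H M"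
  shows HM_marking: "lift_marking N N' M' s + tokrep_ms N (HM M') s \<ge> 0"
    and HM_enables: "enabled N' M' t' \<Longrightarrow> lab N' t' = Some a \<Longrightarrow>
      \<exists>t\<in>trans N. (\<forall>s. int (pre N t s) \<le> lift_marking N N' M' s + tokrep_ms N (HM M') s) \<and> lab N t = Some a"
    and HM_dominates: "H u \<le> HM M' u"
    and negative_in_Tm: "H u < 0 \<Longrightarrow> u \<in> Tm"
    and negative_positive_disjoint: "H u < 0 \<Longrightarrow> H t > 0 \<Longrightarrow> pre N u s = 0 \<or> pre N t s = 0"
    and negative_visible_disjoint:
      "H u < 0 \<Longrightarrow> enabled N M t \<Longrightarrow> lab N t \<noteq> None \<Longrightarrow> pre N u s = 0 \<or> pre N t s = 0"
proof -
  note bounds = dominating[OF assms(1), unfolded dominating_multiset_def, THEN conjunct2,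
      THEN conjunct2, THEN conjunct2, rule_format, OF assms(2) conjI[OF assms(3) conjI[OF assms(4,5)]]]
  show "enabled N' M' t' \<Longrightarrow> lab N' t' = Some a \<Longrightarrow>
      \<exists>t\<in>trans N. (\<forall>s. int (pre N t s) \<le> lift_marking N N' M' s + tokrep_ms N (HM M') s) \<and> lab N t = Some a"
    using bounds by blast
  show "lift_marking N N' M' s + tokrep_ms N (HM M') s \<ge> 0"
    and "H u \<le> HM M' u"
    and "H u < 0 \<Longrightarrow> u \<in> Tm"
    and "H u < 0 \<Longrightarrow> H t > 0 \<Longrightarrow> pre N u s = 0 \<or> pre N t s = 0"
    and "H u < 0 \<Longrightarrow> enabled N M t \<Longrightarrow> lab N t \<noteq> None \<Longrightarrow> pre N u s = 0 \<or> pre N t s = 0"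
    using bounds by simp_all
qed

definition related :: "('s \<Rightarrow> nat) \<Rightarrow> ('s \<Rightarrow> nat) \<Rightarrow> bool" where
  "related M M' \<longleftrightarrow> reachable N M \<and> reachable N' M' \<and>
     (\<exists>G. fin_sms (trans N) G \<and> invisible N G \<and> represents N N' M' G M)"

lemma related_normal_form:
  assumes "related M M'"
  obtains H where "H \<in> NF" "fin_sms (trans N) H" "invisible N H" "represents N N' M' H M"
proof -
  obtain G where G: "fin_sms (trans N) G" "invisible N G" "represents N N' M' G M"
    using assms unfolding related_def by blast
  obtain H where "H \<in> NF" "fin_sms (trans N) H" "invisible N H" "tokrep_ms N H = tokrep_ms N G"
    by (rule normal_form[OF G(1,2)])
  then show ?thesis using that represents_tokrep_cong[OF _ G(3)] by blast
qed

lemma related_init: "related (init N) (init N')"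
  unfolding related_def represents_def lift_marking_def
  by (intro conjI reachable_init exI[of _ "\<lambda>_. 0"]) (simp_all add: fin_sms_def invisible_def)

lemma related_tau:
  assumes "related M M'" "enabled N M t" "lab N t = None"
  shows "related (fire N M t) M'"
proof -
  obtain G where G: "fin_sms (trans N) G" "invisible N G" "represents N N' M' G M"
    and reach: "reachable N M" "reachable N' M'"
    using assms(1) unfolding related_def by blast
  have "t \<in> trans N" using assms(2) unfolding enabled_def by blast
  then show ?thesis
    unfolding related_def
    using reachable_fire[OF reach(1) assms(2)] reach(2)
      fin_sms_add[OF G(1) fin_sms_single] invisible_add[OF G(2) invisible_single[OF assms(3)]]
      represents_fire[OF G(3) assms(2) fin_sms_finite_support[OF G(1)]]
    by blast
qed

lemma related_visible:
  assumes "related M M'" "enabled N M t" "enabled N' M' t'" "lab N' t' = lab N t" "lab N t \<noteq> None"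
  shows "related (fire N M t) (fire N' M' t')"
proof -
  obtain H where H: "fin_sms (trans N) H" "invisible N H" "represents N N' M' H M"
    and reach: "reachable N M" "reachable N' M'"
    using assms(1) unfolding related_def by blast
  have "t \<in> trans N" "t' \<in> trans N'" using assms(2,3) unfolding enabled_def by blast+
  then obtain t'' G where t'': "t'' \<in> trans N'" "lab N' t'' = lab N t"
    and G: "fin_sms (trans N) G" "invisible N G"
      "tokrep N' t'' = tokrep_ms N (\<lambda>u. (if u = t then 1 else 0) + G u)"
    using visible_match assms(5) by blast
  have "t'' = t'"
    using plain' t'' \<open>t' \<in> trans N'\<close> assms(4) unfolding plain_def by (metis inj_onD)
  have finH: "finite {u. H u \<noteq> 0}" and finG: "finite {u. G u \<noteq> 0}"
    using H(1) G(1) by (simp_all add: fin_sms_finite_support)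
  have "tokrep N' t' s = tokrep N t s + tokrep_ms N G s" for s
    using G(3) \<open>t'' = t'\<close> tokrep_ms_add[of "\<lambda>u. if u = t then 1 else 0" G N s] finG by simp
  then have "represents N N' (fire N' M' t') (\<lambda>u. H u - G u) (fire N M t)"
    using H(3) assms(2,3) unfolding represents_def lift_marking_def
    by (simp add: int_fire tokrep_ms_diff[OF finH finG])
  then show ?thesis
    unfolding related_def
    using reachable_fire[OF reach(1) assms(2)] reachable_fire[OF reach(2) assms(3)]
      fin_sms_diff[OF H(1) G(1)] invisible_diff[OF H(2) G(2)]
    by blast
qed

lemma related_enabled_transfer:
  assumes "related M M'" "enabled N M t" "lab N t \<noteq> None" "t' \<in> trans N'"
    and origins: "\<And>s. enat (pre N' t' s) \<le> origins N Tp origin_places (Inr t) s"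
  shows "enabled N' M' t'"
proof -
  obtain H where H: "H \<in> NF" "fin_sms (trans N) H" "invisible N H" "represents N N' M' H M"
    using related_normal_form[OF assms(1)] by blast
  have reach: "reachable N M" "reachable N' M'" using assms(1) unfolding related_def by blast+
  note nf = reach(2) H(1,2) reach(1) H(4)
  have "pre N' t' s \<le> M' s" for s
  proof (cases "pre N' t' s = 0")
    case False
    then have "s \<in> places N'" using wf' unfolding wf_net_def by auto
    obtain xs where xs: "faithful_path N Tp origin_places xs" "hd xs = Inl s" "last xs = Inr t"
        and weight: "pre N' t' s \<le> path_weight N xs"
      using origins_witness[OF origins] False by blast
    have "int (path_weight N xs) * (if t = t then 1 else H t) \<le> lift_marking N N' M' s"
    proof (rule faithful_path_weight_bound[OF _ _ _ _ _ _ _ _ xs])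
      show "finite {y. H y \<noteq> 0}" using H(2) by (rule fin_sms_finite_support)
      show "int (M q) = lift_marking N N' M' q + tokrep_ms N H q" for q
        using H(4) unfolding represents_def by simp
      show "lift_marking N N' M' q = 0" if "q \<notin> origin_places" for q
        using lift_marking_outside[OF reach(2) that] .
      show "y \<in> Tp" if "H y > 0" for y
        using HM_dominates[OF nf, of y] HM_fin[OF reach(2)] that unfolding fin_sms_def by force
      show "H t = 0" using H(3) assms(3) unfolding invisible_def by auto
      show "pre N u q = 0 \<or> pre N y q = 0" if "H u < 0" "y = t \<or> H y > 0" for u y q
        using that(2) negative_positive_disjoint[OF nf that(1), of y q]
          negative_visible_disjoint[OF nf that(1) assms(2,3), of q] by auto
      show "pre N t q \<le> M q" for q using assms(2) unfolding enabled_def by blast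
      show "s \<in> origin_places" using \<open>s \<in> places N'\<close> by simp
    qed simp
    then show ?thesis using weight lift_marking_places'[OF \<open>s \<in> places N'\<close>] by simp
  qed simp
  then show ?thesis using assms(4) unfolding enabled_def by blast
qed

lemma tau_steps_fire_negative_part:
  assumes nf: "reachable N' M'" "H \<in> NF" "fin_sms (trans N) H" "reachable N M" "represents N N' M' H M"
    and "invisible N H"
  shows "\<exists>M2. tau_steps N M M2 \<and> represents N N' M' (\<lambda>u. max 0 (H u)) M2"
proof -
  define Hpos where "Hpos u = max 0 (H u)" for u
  define Hneg where "Hneg u = max 0 (- H u)" for u
  have finH: "finite {u. H u \<noteq> 0}" using nf(3) by (rule fin_sms_finite_support)
  have supp: "{u. Hneg u \<noteq> 0} \<subseteq> {u. H u \<noteq> 0}" unfolding Hneg_def by auto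
  then have finHneg: "finite {u. Hneg u \<noteq> 0}" using finH by (rule finite_subset)
  have "Hpos = (\<lambda>u. H u + Hneg u)" unfolding Hpos_def Hneg_def by auto
  then have Hpos: "tokrep_ms N Hpos p = tokrep_ms N H p + tokrep_ms N Hneg p" for p
    using tokrep_ms_add[OF finH finHneg] by simp
  have "\<exists>M2. tau_steps N M M2 \<and> (\<forall>p. int (M2 p) = int (M p) + tokrep_ms N Hneg p)"
  proof (rule tau_steps_fire_acyclic[OF wf acyclic_Tm Tm_sub])
    have "{u. Hneg u \<noteq> 0} \<subseteq> Tm" using negative_in_Tm[OF nf] unfolding Hneg_def by auto
    then show "fin_sms Tm Hneg" using finHneg unfolding fin_sms_def by blast
    show "Hneg u \<ge> 0" for u unfolding Hneg_def by simp
    show "invisible N Hneg" using \<open>invisible N H\<close> supp unfolding invisible_def by blast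
    fix p assume "\<exists>u. Hneg u \<noteq> 0 \<and> pre N u p > 0"
    then obtain u where u: "Hneg u \<noteq> 0" "pre N u p > 0" by blast
    then have "H u < 0" unfolding Hneg_def by (auto simp: max_def split: if_splits)
    have "Hpos y * tokrep N y p \<ge> 0" for y
    proof (cases "H y > 0")
      case True
      then have "pre N y p = 0"
        using negative_positive_disjoint[OF nf \<open>H u < 0\<close> True, of p] u(2) by simp
      then show ?thesis unfolding Hpos_def tokrep_def by simp
    qed (simp add: Hpos_def)
    then have "tokrep_ms N Hpos p \<ge> 0" unfolding tokrep_ms_def by (simp add: sum_nonneg)
    then show "int (M p) + tokrep_ms N Hneg p \<ge> 0"
      using nf(5) Hpos lift_marking_nonneg[of M' p] unfolding represents_def by (simp add: algebra_simps)
  qed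
  then show ?thesis using nf(5) Hpos unfolding represents_def Hpos_def by auto
qed

lemma tau_steps_to_dominating:
  assumes "related M M'"
  shows "\<exists>M3. tau_steps N M M3 \<and> related M3 M' \<and> represents N N' M' (HM M') M3"
proof -
  obtain H where H: "H \<in> NF" "fin_sms (trans N) H" "invisible N H" "represents N N' M' H M"
    using related_normal_form[OF assms] by blast
  have reach: "reachable N M" "reachable N' M'" using assms unfolding related_def by blast+
  note nf = reach(2) H(1,2) reach(1) H(4)
  obtain M2 where M2: "tau_steps N M M2" "represents N N' M' (\<lambda>u. max 0 (H u)) M2"
    using tau_steps_fire_negative_part[OF nf H(3)] by blast
  define K where "K u = HM M' u - max 0 (H u)" for u
  have supp: "{u. K u \<noteq> 0} \<subseteq> {u. HM M' u \<noteq> 0}"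
  proof
    fix u assume "u \<in> {u. K u \<noteq> 0}"
    then show "u \<in> {u. HM M' u \<noteq> 0}"
      using HM_dominates[OF nf, of u] unfolding K_def by (auto simp: max_def split: if_splits)
  qed
  have finHM: "finite {u. HM M' u \<noteq> 0}"
    using HM_fin[OF reach(2)] by (rule fin_sms_finite_support)
  have finHpos: "finite {u. max 0 (H u) \<noteq> 0}"
    using fin_sms_finite_support[OF H(2)] by (rule finite_subset[rotated]) auto
  have tokK: "tokrep_ms N K p = tokrep_ms N (HM M') p - tokrep_ms N (\<lambda>u. max 0 (H u)) p" for p
    unfolding K_def by (rule tokrep_ms_diff[OF finHM finHpos])
  have "\<exists>M3. tau_steps N M2 M3 \<and> (\<forall>p. int (M3 p) = int (M2 p) + tokrep_ms N K p)"
  proof (rule tau_steps_fire_acyclic[OF wf acyclic_Tp Tp_sub])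
    show "fin_sms Tp K" using HM_fin[OF reach(2)] supp unfolding fin_sms_def by (meson finite_subset order_trans)
    show "K u \<ge> 0" for u using HM_dominates[OF nf, of u] HM_nonneg[OF reach(2)] unfolding K_def by simp
    show "invisible N K" using HM_invisible[OF reach(2)] supp unfolding invisible_def by blast
    show "int (M2 p) + tokrep_ms N K p \<ge> 0" for p
      using M2(2) tokK HM_marking[OF nf, of p] unfolding represents_def by simp
  qed
  then obtain M3 where M3: "tau_steps N M2 M3" "\<forall>p. int (M3 p) = int (M2 p) + tokrep_ms N K p"
    by blast
  have "represents N N' M' (HM M') M3"
    using M2(2) M3(2) tokK unfolding represents_def by simp
  moreover have "tau_steps N M M3" using M2(1) M3(1) by (rule rtranclp_trans)
  moreover have "related M3 M'"
    unfolding related_def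
    using reachable_tau_steps[OF \<open>tau_steps N M M3\<close> reach(1)] reach(2) \<open>represents N N' M' (HM M') M3\<close>
      fin_sms_mono[OF HM_fin[OF reach(2)] Tp_sub] HM_invisible[OF reach(2)]
    by blast
  ultimately show ?thesis by blast
qed

text \<open>Every invisible step adds a transition of positive f-weight to the represented multiset,
  while the f-weight of a normal form is bounded by that of HM M'.\<close>
lemma no_divergence:
  assumes steps: "\<And>k. net_step N (ps k) None (ps (Suc k))" and R: "\<And>k. related (ps k) M'"
  shows False
proof -
  obtain G0 where G0: "fin_sms (trans N) G0" "invisible N G0" "represents N N' M' G0 (ps 0)"
    using R[of 0] unfolding related_def by blast
  have grow: "\<exists>G. fin_sms (trans N) G \<and> invisible N G \<and> represents N N' M' G (ps k) \<and>
      fval f G0 + int k \<le> fval f G" for k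
  proof (induction k)
    case 0
    show ?case using G0 by auto
  next
    case (Suc k)
    then obtain G where G: "fin_sms (trans N) G" "invisible N G" "represents N N' M' G (ps k)"
      "fval f G0 + int k \<le> fval f G" by blast
    obtain u where u: "enabled N (ps k) u" "lab N u = None" "ps (Suc k) = fire N (ps k) u"
      using steps[of k] unfolding net_step_def by blast
    have "u \<in> trans N" using u(1) unfolding enabled_def by blast
    have finG: "finite {v. G v \<noteq> 0}" using G(1) by (rule fin_sms_finite_support)
    have "fval f (\<lambda>v. G v + (if v = u then 1 else 0)) = fval f G + int (f u)"
      using fval_add[OF finG, of "\<lambda>v. if v = u then 1 else 0" f] by simp
    moreover have "f u > 0" using f_pos \<open>u \<in> trans N\<close> by blast
    ultimately show ?case
      using fin_sms_add[OF G(1) fin_sms_single[OF \<open>u \<in> trans N\<close>]]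
        invisible_add[OF G(2) invisible_single[OF u(2)]] represents_fire[OF G(3) u(1) finG] u(3) G(4)
      by (intro exI[of _ "\<lambda>v. G v + (if v = u then 1 else 0)"]) auto
  qed
  define k where "k = nat (fval f (HM M') - fval f G0) + 1"
  obtain G where G: "fin_sms (trans N) G" "invisible N G" "represents N N' M' G (ps k)"
    "fval f G0 + int k \<le> fval f G"
    using grow by blast
  obtain H where H: "H \<in> NF" "fin_sms (trans N) H" "invisible N H" "tokrep_ms N H = tokrep_ms N G"
    "fval f H = fval f G"
    by (rule normal_form[OF G(1,2)])
  have "represents N N' M' H (ps k)" using represents_tokrep_cong[OF H(4) G(3)] .
  have reach: "reachable N (ps k)" "reachable N' M'" using R[of k] unfolding related_def by blast+
  have "finite {u. HM M' u \<noteq> 0}" using HM_fin[OF reach(2)] by (rule fin_sms_finite_support)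
  then have "fval f H \<le> fval f (HM M')"
    using fval_mono[OF fin_sms_finite_support[OF H(2)]] HM_dominates[OF reach(2) H(1,2) reach(1) \<open>represents N N' M' H (ps k)\<close>]
    by blast
  then show False using G(4) H(5) unfolding k_def by linarith
qed

lemma related_visible_step:
  assumes "related M M'" "enabled N M t" "lab N t \<noteq> None"
  shows "\<exists>M2'. net_step N' M' (lab N t) M2' \<and> related (fire N M t) M2'"
proof -
  have "t \<in> trans N" using assms(2) unfolding enabled_def by blast
  then obtain t' where t': "t' \<in> trans N'" "lab N' t' = lab N t"
      "\<And>s. enat (pre N' t' s) \<le> origins N Tp origin_places (Inr t) s"
    using visible_match assms(3) by blast
  have "enabled N' M' t'" by (rule related_enabled_transfer[OF assms t'(1,3)])
  then show ?thesis
    using related_visible[OF assms(1,2) _ t'(2) assms(3)] t'(2) unfolding net_step_def by auto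
qed

lemma related_visible_step':
  assumes "related M M'" "net_step N' M' \<alpha> M2'"
  shows "\<exists>M1 M2. tau_steps N M M1 \<and> net_step N M1 \<alpha> M2 \<and> related M1 M' \<and> related M2 M2'"
proof -
  obtain t' where t': "enabled N' M' t'" "lab N' t' = \<alpha>" "M2' = fire N' M' t'"
    using assms(2) unfolding net_step_def by blast
  obtain a where a: "\<alpha> = Some a" using t' plain' unfolding plain_def enabled_def by blast
  obtain M1 where M1: "tau_steps N M M1" "related M1 M'" "represents N N' M' (HM M') M1"
    using tau_steps_to_dominating[OF assms(1)] by blast
  obtain H where H: "H \<in> NF" "fin_sms (trans N) H" "represents N N' M' H M"
    using related_normal_form[OF assms(1)] by blast
  have reach: "reachable N M" "reachable N' M'" using assms(1) unfolding related_def by blast+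
  obtain t where "t \<in> trans N" "lab N t = Some a"
    and pre_le: "\<And>s. int (pre N t s) \<le> lift_marking N N' M' s + tokrep_ms N (HM M') s"
    using HM_enables[OF reach(2) H(1,2) reach(1) H(3) t'(1)] t'(2) a by blast
  have "int (pre N t s) \<le> int (M1 s)" for s
    using pre_le[of s] M1(3) unfolding represents_def by simp
  then have "enabled N M1 t" using \<open>t \<in> trans N\<close> unfolding enabled_def by simp
  then have "net_step N M1 \<alpha> (fire N M1 t) \<and> related (fire N M1 t) M2'"
    using related_visible[OF M1(2) _ t'(1)] \<open>lab N t = Some a\<close> t' a unfolding net_step_def by auto
  then show ?thesis using M1(1,2) by blast
qed

lemma bb_transfer_related: "bb_transfer (net_step N) (net_step N') related"
  unfolding bb_transfer_def
proof (intro conjI allI impI)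
  fix M M' \<alpha> M2
  assume "related M M' \<and> net_step N M \<alpha> M2"
  then obtain t where R: "related M M'" and t: "enabled N M t" "lab N t = \<alpha>" "M2 = fire N M t"
    unfolding net_step_def by blast
  show "\<alpha> = None \<and> related M2 M' \<or>
      (\<exists>M1' M2'. tau_steps N' M' M1' \<and> net_step N' M1' \<alpha> M2' \<and> related M M1' \<and> related M2 M2')"
  proof (cases "\<alpha> = None")
    case True
    then show ?thesis using related_tau[OF R t(1)] t by simp
  next
    case False
    then obtain M2' where "net_step N' M' \<alpha> M2'" "related M2 M2'"
      using related_visible_step[OF R t(1)] t by auto
    then show ?thesis using R by blast
  qed
next
  fix M M' ps
  assume "related M M' \<and> ps 0 = M \<and> (\<forall>k. net_step N (ps k) None (ps (Suc k))) \<and> (\<forall>k. related (ps k) M')"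
  then show "\<exists>qs. qs 0 = M' \<and> (\<forall>l. net_step N' (qs l) None (qs (Suc l))) \<and> (\<forall>k l. related (ps k) (qs l))"
    using no_divergence by blast
qed

lemma bb_transfer_related': "bb_transfer (net_step N') (net_step N) (conversep related)"
  unfolding bb_transfer_def conversep_iff
  using related_visible_step' plain_no_tau_step[OF plain'] by blast

theorem bisimilar: "int_bbd_bisimilar N N'"
  unfolding int_bbd_bisimilar_def bbd_bisim_def using bb_transfer_related bb_transfer_related' related_init by blast

end

theorem theorem6p11:
  fixes N :: "('s, 't, 'a) pnet" and N' :: "('s, 'u, 'a) pnet"
    and Tp Tm :: "'t set" and NF :: "('t \<Rightarrow> int) set"
  assumes wfN: "wf_net N" and wfN': "wf_net N'" and plainN': "plain N'"
    and places_sub: "places N' \<subseteq> places N"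
    and init_restr: "\<forall>s. init N' s = (if s \<in> places N' then init N s else 0)"
    and Tp_sub: "Tp \<subseteq> trans N" and Tm_sub: "Tm \<subseteq> trans N"
    and NF_sub: "\<forall>H \<in> NF. {t. H t \<noteq> 0} \<subseteq> trans N"
    and c1: "acyclic (flow_restr N Tp)"
    and c2: "acyclic (flow_restr N Tm)"
    and c3: "\<forall>t \<in> trans N. lab N t \<noteq> None \<longrightarrow>
       (\<exists>t' \<in> trans N'. lab N' t' = lab N t \<and>
          (\<forall>s. enat (pre N' t' s) \<le>
               origins N Tp (places N' \<union> {s \<in> places N. init N s > 0}) (Inr t) s) \<and>
          (\<exists>G. fin_sms (trans N) G \<and> (\<forall>u. G u \<ge> 0) \<and> invisible N G \<and>
               tokrep N' t' = tokrep_ms N (\<lambda>u. (if u = t then 1 else 0) + G u)))"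
    and c4: "\<exists>f :: 't \<Rightarrow> nat. (\<forall>t \<in> trans N. f t > 0) \<and>
       (\<forall>G. fin_sms (trans N) G \<and> invisible N G \<longrightarrow>
          (\<exists>H \<in> NF. fin_sms (trans N) H \<and> invisible N H \<and>
             tokrep_ms N H = tokrep_ms N G \<and> fval f H = fval f G))"
    and c5: "\<forall>M'. reachable N' M' \<longrightarrow>
       (\<exists>HM. fin_sms Tp HM \<and> (\<forall>u. HM u \<ge> 0) \<and> invisible N HM \<and>
          (\<forall>H \<in> NF. \<forall>M. fin_sms (trans N) H \<and> reachable N M \<and>
             (\<forall>s. int (M s) = int (M' s) + (int (init N s) - int (init N' s)) + tokrep_ms N H s)
           \<longrightarrow>
             (let MM = (\<lambda>s. int (M' s) + (int (init N s) - int (init N' s)) + tokrep_ms N HM s) in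
               (\<forall>s. MM s \<ge> 0) \<and>
               (\<forall>a t'. enabled N' M' t' \<and> lab N' t' = Some a \<longrightarrow>
                  (\<exists>t \<in> trans N. (\<forall>s. int (pre N t s) \<le> MM s) \<and> lab N t = Some a)) \<and>
               (\<forall>u. H u \<le> HM u) \<and>
               (\<forall>u. H u < 0 \<longrightarrow> u \<in> Tm) \<and>
               (\<forall>u t. H u < 0 \<and> H t > 0 \<longrightarrow> (\<forall>s. pre N u s = 0 \<or> pre N t s = 0)) \<and>
               (\<forall>u t. H u < 0 \<and> enabled N M t \<and> lab N t \<noteq> None \<longrightarrow>
                  (\<forall>s. pre N u s = 0 \<or> pre N t s = 0)))))"
  shows "int_bbd_bisimilar N N'"
proof -
  obtain f where f: "weighted_normal_forms N NF f"
    using c4 unfolding weighted_normal_forms_def by blast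
  have "\<forall>M'. reachable N' M' \<longrightarrow> (\<exists>HM. dominating_multiset N N' Tp Tm NF M' HM)"
    using c5 unfolding dominating_multiset_def represents_def lift_marking_def Let_def .
  then obtain HM where HM: "\<And>M'. reachable N' M' \<Longrightarrow> dominating_multiset N N' Tp Tm NF M' (HM M')"
    unfolding choice_iff' by blast
  interpret bisimulation_criterion N N' Tp Tm NF f HM
    by unfold_locales
      (fact wfN wfN' plainN' Tp_sub Tm_sub c1 c2 c3[rule_format] f HM | simp add: init_restr)+
  show ?thesis by (rule bisimilar)
qed

end
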